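(* Let H be the Hilbert calculus LFI3 extended with the axiom schema (cc) $\circ\circ\alpha$. Then for every set of formulas $\Gamma$ and formula $\alpha$, $\Gamma\vdash_{H}\alpha$ if and only if $\Gamma\vDash_{LFI1}\alpha$; i.e. LFI1 = LFI3 + (cc).
   Context: Formulas are built from a countable set of propositional variables using unary $\neg,\circ$ and binary $\land,\lor,\to$; $\alpha\leftrightarrow\beta:=(\alpha\to\beta)\land(\beta\to\alpha)$, $\sim\alpha:=\neg\alpha\land\circ\alpha$. mbC is the Hilbert calculus with the axiom schemas of a standard axiomatization of positive classical propositional logic in $\land,\lor,\to$, plus $\alpha\lor\neg\alpha$ and $\circ\alpha\to(\alpha\to(\neg\alpha\to\beta))$, with modus ponens as only rule. The Hilbert calculus LFI3 is mbC plus the schemas $\circ\alpha\lor(\alpha\land\neg\alpha)$, $\circ\circ\circ\alpha$, $\neg\neg\alpha\to\alpha$, $\alpha\to\neg\neg\alpha$, $\neg\circ\neg\alpha\leftrightarrow\neg\circ\alpha$, and: A1 $\neg(\alpha\land\beta)\leftrightarrow(\neg\alpha\lor\neg\beta)$; A2 $\neg(\alpha\lor\beta)\leftrightarrow(\neg\alpha\land\neg\beta)$; A3 $\neg(\alpha\to\beta)\leftrightarrow(\neg\beta\land(\sim\neg\alpha\lor\neg\circ\alpha))$; A4 $\neg\circ(\alpha\land\beta)\leftrightarrow(((\sim\neg\alpha\land\neg\circ\beta)\lor(\neg\circ\alpha\land\sim\neg\beta))\lor(\neg\circ\alpha\land\neg\circ\beta))$; A5 $\neg\circ(\alpha\lor\beta)\leftrightarrow(((\sim\alpha\land\neg\circ\beta)\lor(\neg\circ\alpha\land\sim\beta))\lor(\neg\circ\alpha\land\neg\circ\beta))$;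 A6 $\neg\circ(\alpha\to\beta)\leftrightarrow((\sim\neg\alpha\land\neg\circ\beta)\lor(\sim\neg\alpha\land\neg\circ\alpha\land\sim\beta)\lor(\neg\circ\alpha\land\neg\circ\beta)\lor(\sim\alpha\land\neg\circ\alpha\land\sim\beta))$. LFI1 is the three-valued matrix logic on $\{1,\frac12,0\}$ with designated set $\{1,\frac12\}$, $\land=\min$, $\lor=\max$ (order $0<\frac12<1$), $a\to c=1$ if $a=0$ and $a\to c=c$ otherwise, $\neg1=0$, $\neg\frac12=\frac12$, $\neg0=1$, $\circ1=\circ0=1$, $\circ\frac12=0$; $\Gamma\vDash_{LFI1}\alpha$ iff every homomorphic valuation designating all of $\Gamma$ designates $\alpha$. *)

theory Defs
  imports Main
begin

datatype fm =
    Var nat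
  | Neg fm
  | Circ fm
  | Conj fm fm
  | Disj fm fm
  | Imp fm fm

definition Iff :: "fm \<Rightarrow> fm \<Rightarrow> fm" where
  "Iff a b = Conj (Imp a b) (Imp b a)"

definition SNeg :: "fm \<Rightarrow> fm" where
  "SNeg a = Conj (Neg a) (Circ a)"

inductive mbC_ax :: "fm \<Rightarrow> bool" where
  Ax1: "mbC_ax (Imp a (Imp b a))"
| Ax2: "mbC_ax (Imp (Imp a b) (Imp (Imp a (Imp b c)) (Imp a c)))"
| Ax3: "mbC_ax (Imp a (Imp b (Conj a b)))"
| Ax4: "mbC_ax (Imp (Conj a b) a)"
| Ax5: "mbC_ax (Imp (Conj a b) b)"
| Ax6: "mbC_ax (Imp a (Disj a b))"
| Ax7: "mbC_ax (Imp b (Disj a b))"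
| Ax8: "mbC_ax (Imp (Imp a c) (Imp (Imp b c) (Imp (Disj a b) c)))"
| Ax9: "mbC_ax (Disj a (Imp a b))"
| Ax10: "mbC_ax (Disj a (Neg a))"
| bc1: "mbC_ax (Imp (Circ a) (Imp a (Imp (Neg a) b)))"

inductive LFI3_extra :: "fm \<Rightarrow> bool" where
  ci: "LFI3_extra (Disj (Circ a) (Conj a (Neg a)))"
| ccc: "LFI3_extra (Circ (Circ (Circ a)))"
| cf: "LFI3_extra (Imp (Neg (Neg a)) a)"
| ce: "LFI3_extra (Imp a (Neg (Neg a)))"
| cneg: "LFI3_extra (Iff (Neg (Circ (Neg a))) (Neg (Circ a)))"
| A1: "LFI3_extra (Iff (Neg (Conj a b)) (Disj (Neg a) (Neg b)))"
| A2: "LFI3_extra (Iff (Neg (Disj a b)) (Conj (Neg a) (Neg b)))"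
| A3: "LFI3_extra (Iff (Neg (Imp a b))
         (Conj (Neg b) (Disj (SNeg (Neg a)) (Neg (Circ a)))))"
| A4: "LFI3_extra (Iff (Neg (Circ (Conj a b)))
         (Disj (Disj (Conj (SNeg (Neg a)) (Neg (Circ b)))
                     (Conj (Neg (Circ a)) (SNeg (Neg b))))
               (Conj (Neg (Circ a)) (Neg (Circ b)))))"
| A5: "LFI3_extra (Iff (Neg (Circ (Disj a b)))
         (Disj (Disj (Conj (SNeg a) (Neg (Circ b)))
                     (Conj (Neg (Circ a)) (SNeg b)))
               (Conj (Neg (Circ a)) (Neg (Circ b)))))"
| A6: "LFI3_extra (Iff (Neg (Circ (Imp a b)))
         (Disj (Disj (Disj (Conj (SNeg (Neg a)) (Neg (Circ b)))
                           (Conj (Conj (SNeg (Neg a)) (Neg (Circ a))) (SNeg b)))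
                     (Conj (Neg (Circ a)) (Neg (Circ b))))
               (Conj (Conj (SNeg a) (Neg (Circ a))) (SNeg b))))"

inductive H_ax :: "fm \<Rightarrow> bool" where
  mbC: "mbC_ax a \<Longrightarrow> H_ax a"
| lfi3: "LFI3_extra a \<Longrightarrow> H_ax a"
| cc: "H_ax (Circ (Circ a))"

inductive H_derives :: "fm set \<Rightarrow> fm \<Rightarrow> bool" where
  prem: "a \<in> \<Gamma> \<Longrightarrow> H_derives \<Gamma> a"
| ax: "H_ax a \<Longrightarrow> H_derives \<Gamma> a"
| mp: "H_derives \<Gamma> a \<Longrightarrow> H_derives \<Gamma> (Imp a b) \<Longrightarrow> H_derives \<Gamma> b"

datatype tv = Zero | Half | One

fun rk :: "tv \<Rightarrow> nat" where
  "rk Zero = 0" | "rk Half = 1" | "rk One = 2"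

definition tmin :: "tv \<Rightarrow> tv \<Rightarrow> tv" where
  "tmin x y = (if rk x \<le> rk y then x else y)"

definition tmax :: "tv \<Rightarrow> tv \<Rightarrow> tv" where
  "tmax x y = (if rk x \<le> rk y then y else x)"

definition timp :: "tv \<Rightarrow> tv \<Rightarrow> tv" where
  "timp x y = (if x = Zero then One else y)"

fun tneg :: "tv \<Rightarrow> tv" where
  "tneg One = Zero" | "tneg Half = Half" | "tneg Zero = One"

fun tcirc :: "tv \<Rightarrow> tv" where
  "tcirc One = One" | "tcirc Half = Zero" | "tcirc Zero = One"

definition designated :: "tv \<Rightarrow> bool" where
  "designated x \<longleftrightarrow> x = One \<or> x = Half"

fun eval :: "(nat \<Rightarrow> tv) \<Rightarrow> fm \<Rightarrow> tv" where
  "eval v (Var p) = v p"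
| "eval v (Neg a) = tneg (eval v a)"
| "eval v (Circ a) = tcirc (eval v a)"
| "eval v (Conj a b) = tmin (eval v a) (eval v b)"
| "eval v (Disj a b) = tmax (eval v a) (eval v b)"
| "eval v (Imp a b) = timp (eval v a) (eval v b)"

definition LFI1_entails :: "fm set \<Rightarrow> fm \<Rightarrow> bool" where
  "LFI1_entails \<Gamma> a \<longleftrightarrow>
     (\<forall>v. (\<forall>g\<in>\<Gamma>. designated (eval v g)) \<longrightarrow> designated (eval v a))"

end

theory Submission
  imports Defs
begin

text \<open>Soundness is a truth-table check of the axioms. For completeness, Zorn's lemma
  extends \<open>\<Gamma>\<close> to a set \<open>M\<close> maximal among those not deriving \<open>\<alpha>\<close>.
  Membership in \<open>M\<close> is classical for \<open>\<and>, \<or>, \<rightarrow>\<close>; the LFI3 axioms reduce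
  membership of \<open>\<not>\<gamma>\<close>, for compound \<open>\<gamma>\<close>, to membership of the components and
  their negations, and \<open>\<circ>\<beta> \<in> M\<close> iff not both \<open>\<beta>, \<not>\<beta> \<in> M\<close>. Axiom (cc)
  supplies the missing case: \<open>\<circ>\<circ>\<beta> \<in> M\<close> forbids \<open>\<circ>\<beta>\<close> and
  \<open>\<not>\<circ>\<beta>\<close> both in \<open>M\<close>, so \<open>\<not>\<circ>\<beta> \<in> M\<close> iff \<open>\<beta>, \<not>\<beta> \<in> M\<close>.
  Hence sending \<open>\<beta>\<close> to 0 if \<open>\<beta> \<notin> M\<close>, to \<open>\<onehalf>\<close> if \<open>\<beta>, \<not>\<beta> \<in> M\<close>
  and to 1 otherwise is an LFI1 valuation designating exactly \<open>M\<close>. The LFI3 axioms on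
  \<open>\<circ>\<close> of compound formulas (A4--A6, \<open>\<circ>\<circ>\<circ>\<alpha>\<close>,
  \<open>\<not>\<circ>\<not>\<alpha> \<leftrightarrow> \<not>\<circ>\<alpha>\<close>) are needed only for soundness.\<close>

abbreviation H_derives_infix :: "fm set \<Rightarrow> fm \<Rightarrow> bool" (infix "\<turnstile>" 50) where
  "\<Gamma> \<turnstile> a \<equiv> H_derives \<Gamma> a"

lemma designated_simps:
  "designated (tmin x y) \<longleftrightarrow> designated x \<and> designated y"
  "designated (tmax x y) \<longleftrightarrow> designated x \<or> designated y"
  "designated (timp x y) \<longleftrightarrow> \<not> designated x \<or> designated y"
  "designated (tneg x) \<longleftrightarrow> \<not> designated x \<or> x = Half"
  "designated (tcirc x) \<longleftrightarrow> x \<noteq> Half"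
  by (cases x; cases y; simp add: designated_def tmin_def tmax_def timp_def)+

lemma mbC_ax_valid: "mbC_ax a \<Longrightarrow> designated (eval v a)"
  by (induction rule: mbC_ax.induct) (auto simp: designated_simps)

lemmas LFI1_defs = designated_def tmin_def tmax_def timp_def Iff_def SNeg_def

lemma LFI3_extra_valid: "LFI3_extra a \<Longrightarrow> designated (eval v a)"
proof (induction rule: LFI3_extra.induct)
  case (ci a) show ?case by (cases "eval v a"; simp add: LFI1_defs)
next
  case (ccc a) show ?case by (cases "eval v a"; simp add: LFI1_defs)
next
  case (cf a) show ?case by (cases "eval v a"; simp add: LFI1_defs)
next
  case (ce a) show ?case by (cases "eval v a"; simp add: LFI1_defs)
next
  case (cneg a) show ?case by (cases "eval v a"; simp add: LFI1_defs)
next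
  case (A1 a b) show ?case by (cases "eval v a"; cases "eval v b"; simp add: LFI1_defs)
next
  case (A2 a b) show ?case by (cases "eval v a"; cases "eval v b"; simp add: LFI1_defs)
next
  case (A3 a b) show ?case by (cases "eval v a"; cases "eval v b"; simp add: LFI1_defs)
next
  case (A4 a b) show ?case by (cases "eval v a"; cases "eval v b"; simp add: LFI1_defs)
next
  case (A5 a b) show ?case by (cases "eval v a"; cases "eval v b"; simp add: LFI1_defs)
next
  case (A6 a b) show ?case by (cases "eval v a"; cases "eval v b"; simp add: LFI1_defs)
qed

lemma H_ax_valid: "H_ax a \<Longrightarrow> designated (eval v a)"
proof (induction rule: H_ax.induct)
  case (cc a)
  show ?case by (cases "eval v a") (simp_all add: designated_def)
qed (simp_all add: mbC_ax_valid LFI3_extra_valid)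

theorem H_derives_sound: "\<Gamma> \<turnstile> a \<Longrightarrow> LFI1_entails \<Gamma> a"
  unfolding LFI1_entails_def
proof (induction rule: H_derives.induct)
  case (mp \<Gamma> a b)
  show ?case
  proof (intro allI impI)
    fix v
    assume "\<forall>g\<in>\<Gamma>. designated (eval v g)"
    with mp.IH have "designated (eval v a)" "designated (eval v (Imp a b))"
      by blast+
    then show "designated (eval v b)"
      by (simp add: designated_simps)
  qed
qed (simp_all add: H_ax_valid)

lemma H_derives_mbC_ax: "mbC_ax a \<Longrightarrow> \<Gamma> \<turnstile> a"
  by (intro H_derives.ax H_ax.mbC)

lemma H_derives_LFI3_extra: "LFI3_extra a \<Longrightarrow> \<Gamma> \<turnstile> a"
  by (intro H_derives.ax H_ax.lfi3)

lemma H_derives_Imp_self: "\<Gamma> \<turnstile> Imp a a"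
proof -
  have "\<Gamma> \<turnstile> Imp (Imp a (Imp a a)) (Imp (Imp a (Imp (Imp a a) a)) (Imp a a))"
    by (intro H_derives_mbC_ax mbC_ax.Ax2)
  moreover have "\<Gamma> \<turnstile> Imp a (Imp a a)" "\<Gamma> \<turnstile> Imp a (Imp (Imp a a) a)"
    by (intro H_derives_mbC_ax mbC_ax.Ax1)+
  ultimately show ?thesis
    by (meson H_derives.mp)
qed

lemma H_derives_weaken_Imp: "\<Gamma> \<turnstile> a \<Longrightarrow> \<Gamma> \<turnstile> Imp b a"
  by (meson H_derives.mp H_derives_mbC_ax mbC_ax.Ax1)

theorem H_deduction: "insert b \<Gamma> \<turnstile> a \<Longrightarrow> \<Gamma> \<turnstile> Imp b a"
proof (induction "insert b \<Gamma>" a rule: H_derives.induct)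
  case (prem a)
  then show ?case
    by (auto intro: H_derives_Imp_self H_derives_weaken_Imp H_derives.prem)
next
  case (ax a)
  then show ?case
    by (intro H_derives_weaken_Imp H_derives.ax)
next
  case (mp a c)
  have "\<Gamma> \<turnstile> Imp (Imp b a) (Imp (Imp b (Imp a c)) (Imp b c))"
    by (intro H_derives_mbC_ax mbC_ax.Ax2)
  with mp.hyps show ?case
    by (meson H_derives.mp)
qed

lemma H_derives_mono: "\<Gamma> \<turnstile> a \<Longrightarrow> \<Gamma> \<subseteq> \<Delta> \<Longrightarrow> \<Delta> \<turnstile> a"
proof (induction rule: H_derives.induct)
  case (prem a \<Gamma>)
  then show ?case by (blast intro: H_derives.prem)
next
  case (ax a \<Gamma>)
  then show ?case by (blast intro: H_derives.ax)
next
  case (mp \<Gamma> a b)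
  then show ?case by (blast intro: H_derives.mp)
qed

lemma H_derives_finite_premises: "\<Gamma> \<turnstile> a \<Longrightarrow> \<exists>F. finite F \<and> F \<subseteq> \<Gamma> \<and> F \<turnstile> a"
proof (induction rule: H_derives.induct)
  case (prem a \<Gamma>)
  then show ?case
    by (intro exI[of _ "{a}"]) (auto intro: H_derives.prem)
next
  case (ax a \<Gamma>)
  then show ?case
    by (intro exI[of _ "{}"]) (auto intro: H_derives.ax)
next
  case (mp \<Gamma> a b)
  then obtain F G where "finite F" "F \<subseteq> \<Gamma>" "F \<turnstile> a" "finite G" "G \<subseteq> \<Gamma>" "G \<turnstile> Imp a b"
    by blast
  have "F \<union> G \<turnstile> a"
    using \<open>F \<turnstile> a\<close> by (rule H_derives_mono) simp
  moreover have "F \<union> G \<turnstile> Imp a b"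
    using \<open>G \<turnstile> Imp a b\<close> by (rule H_derives_mono) simp
  ultimately have "F \<union> G \<turnstile> b"
    by (rule H_derives.mp)
  with \<open>finite F\<close> \<open>finite G\<close> \<open>F \<subseteq> \<Gamma>\<close> \<open>G \<subseteq> \<Gamma>\<close> show ?case
    by (intro exI[of _ "F \<union> G"]) simp
qed

locale maximal_nonderiving =
  fixes M :: "fm set" and a :: fm
  assumes not_derives: "\<not> M \<turnstile> a"
    and maximal: "\<And>X. M \<subseteq> X \<Longrightarrow> \<not> X \<turnstile> a \<Longrightarrow> X = M"

lemma lindenbaum:
  assumes "\<not> \<Gamma> \<turnstile> a"
  obtains M where "\<Gamma> \<subseteq> M" "maximal_nonderiving M a"
proof -
  let ?A = "{X. \<Gamma> \<subseteq> X \<and> \<not> X \<turnstile> a}"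
  have "\<Union>C \<in> ?A" if "C \<noteq> {}" and chain: "subset.chain ?A C" for C
  proof -
    from chain have "C \<subseteq> ?A"
      by (simp add: subset.chain_def)
    have "\<not> \<Union>C \<turnstile> a"
    proof
      assume "\<Union>C \<turnstile> a"
      then obtain F where F: "finite F" "F \<subseteq> \<Union>C" "F \<turnstile> a"
        using H_derives_finite_premises by blast
      obtain X where "X \<in> C" "F \<subseteq> X"
        by (rule finite_subset_Union_chain[OF F(1,2) \<open>C \<noteq> {}\<close> chain])
      with \<open>C \<subseteq> ?A\<close> F(3) show False
        using H_derives_mono by blast
    qed
    moreover from \<open>C \<noteq> {}\<close> \<open>C \<subseteq> ?A\<close> have "\<Gamma> \<subseteq> \<Union>C"
      by blast
    ultimately show ?thesis
      by blast
  qed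
  moreover have "\<Gamma> \<in> ?A"
    using assms by blast
  ultimately obtain M where "M \<in> ?A" "\<forall>X\<in>?A. M \<subseteq> X \<longrightarrow> X = M"
    using subset_Zorn_nonempty[of ?A] by blast
  then have "\<Gamma> \<subseteq> M" "maximal_nonderiving M a"
    by (auto simp: maximal_nonderiving_def)
  then show ?thesis
    by (rule that)
qed

context maximal_nonderiving
begin

lemma mem_iff_derives: "b \<in> M \<longleftrightarrow> M \<turnstile> b"
proof
  assume "M \<turnstile> b"
  show "b \<in> M"
  proof (rule ccontr)
    assume "b \<notin> M"
    then have "insert b M \<turnstile> a"
      using maximal[of "insert b M"] by blast
    then have "M \<turnstile> a"
      using \<open>M \<turnstile> b\<close> by (meson H_deduction H_derives.mp)
    with not_derives show False ..
  qed
qed (rule H_derives.prem)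

lemma a_not_mem: "a \<notin> M"
  using not_derives mem_iff_derives by blast

lemma Imp_a_mem_if_not_mem: "b \<notin> M \<Longrightarrow> Imp b a \<in> M"
  using maximal[of "insert b M"] H_deduction mem_iff_derives by blast

lemma mp_mem: "Imp b c \<in> M \<Longrightarrow> b \<in> M \<Longrightarrow> c \<in> M"
  using mem_iff_derives H_derives.mp by blast

lemma mbC_ax_mem: "mbC_ax b \<Longrightarrow> b \<in> M"
  using mem_iff_derives H_derives_mbC_ax by blast

lemma LFI3_extra_mem: "LFI3_extra b \<Longrightarrow> b \<in> M"
  using mem_iff_derives H_derives_LFI3_extra by blast

lemma Circ_Circ_mem: "Circ (Circ b) \<in> M"
  using mem_iff_derives H_derives.ax H_ax.cc by blast

lemma Conj_mem_iff: "Conj b c \<in> M \<longleftrightarrow> b \<in> M \<and> c \<in> M"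
proof -
  have "Imp (Conj b c) b \<in> M" "Imp (Conj b c) c \<in> M" "Imp b (Imp c (Conj b c)) \<in> M"
    by (rule mbC_ax_mem, rule mbC_ax.Ax4 mbC_ax.Ax5 mbC_ax.Ax3)+
  then show ?thesis
    using mp_mem by blast
qed

lemma Disj_mem_iff: "Disj b c \<in> M \<longleftrightarrow> b \<in> M \<or> c \<in> M"
proof -
  have "Imp b (Disj b c) \<in> M" "Imp c (Disj b c) \<in> M"
    "Imp (Imp b a) (Imp (Imp c a) (Imp (Disj b c) a)) \<in> M"
    by (rule mbC_ax_mem, rule mbC_ax.Ax6 mbC_ax.Ax7 mbC_ax.Ax8)+
  moreover have "b \<in> M \<or> Imp b a \<in> M" "c \<in> M \<or> Imp c a \<in> M"
    using Imp_a_mem_if_not_mem by blast+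
  ultimately show ?thesis
    using mp_mem a_not_mem by metis
qed

lemma Imp_mem_iff: "Imp b c \<in> M \<longleftrightarrow> b \<notin> M \<or> c \<in> M"
proof -
  have "Disj b (Imp b c) \<in> M" "Imp c (Imp b c) \<in> M"
    by (rule mbC_ax_mem, rule mbC_ax.Ax9 mbC_ax.Ax1)+
  then show ?thesis
    using mp_mem Disj_mem_iff by blast
qed

lemma Iff_memD: "Iff b c \<in> M \<Longrightarrow> b \<in> M \<longleftrightarrow> c \<in> M"
  unfolding Iff_def Conj_mem_iff Imp_mem_iff by blast

lemma mem_or_Neg_mem: "b \<in> M \<or> Neg b \<in> M"
  using Disj_mem_iff mbC_ax_mem[OF mbC_ax.Ax10] by blast

lemma Circ_mem_iff: "Circ b \<in> M \<longleftrightarrow> \<not> (b \<in> M \<and> Neg b \<in> M)"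
proof -
  have "Imp (Circ b) (Imp b (Imp (Neg b) a)) \<in> M"
    by (rule mbC_ax_mem, rule mbC_ax.bc1)
  moreover have "Disj (Circ b) (Conj b (Neg b)) \<in> M"
    by (rule LFI3_extra_mem, rule LFI3_extra.ci)
  ultimately show ?thesis
    unfolding Disj_mem_iff Conj_mem_iff Imp_mem_iff using a_not_mem by blast
qed

lemma Neg_Neg_mem_iff: "Neg (Neg b) \<in> M \<longleftrightarrow> b \<in> M"
proof -
  have "Imp (Neg (Neg b)) b \<in> M" "Imp b (Neg (Neg b)) \<in> M"
    by (rule LFI3_extra_mem, rule LFI3_extra.cf LFI3_extra.ce)+
  then show ?thesis
    unfolding Imp_mem_iff by blast
qed

lemma Neg_Circ_mem_iff: "Neg (Circ b) \<in> M \<longleftrightarrow> b \<in> M \<and> Neg b \<in> M"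
  using Circ_mem_iff[of "Circ b"] Circ_mem_iff[of b] Circ_Circ_mem[of b] mem_or_Neg_mem[of "Circ b"]
  by blast

lemma Neg_Conj_mem_iff: "Neg (Conj b c) \<in> M \<longleftrightarrow> Neg b \<in> M \<or> Neg c \<in> M"
  using Iff_memD[OF LFI3_extra_mem[OF LFI3_extra.A1]] unfolding Disj_mem_iff .

lemma Neg_Disj_mem_iff: "Neg (Disj b c) \<in> M \<longleftrightarrow> Neg b \<in> M \<and> Neg c \<in> M"
  using Iff_memD[OF LFI3_extra_mem[OF LFI3_extra.A2]] unfolding Conj_mem_iff .

lemma Neg_Imp_mem_iff: "Neg (Imp b c) \<in> M \<longleftrightarrow> b \<in> M \<and> Neg c \<in> M"
proof -
  have "SNeg (Neg b) \<in> M \<or> Neg (Circ b) \<in> M \<longleftrightarrow> b \<in> M"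
    unfolding SNeg_def Conj_mem_iff Neg_Neg_mem_iff Circ_mem_iff Neg_Circ_mem_iff by blast
  with Iff_memD[OF LFI3_extra_mem[OF LFI3_extra.A3]] show ?thesis
    unfolding Conj_mem_iff Disj_mem_iff by blast
qed

definition canonical_value :: "fm \<Rightarrow> tv" where
  "canonical_value b = (if b \<notin> M then Zero else if Neg b \<in> M then Half else One)"

definition canonical_valuation :: "nat \<Rightarrow> tv" where
  "canonical_valuation p = canonical_value (Var p)"

lemma designated_canonical_value: "designated (canonical_value b) \<longleftrightarrow> b \<in> M"
  by (simp add: canonical_value_def designated_def)

lemma eval_canonical_valuation: "eval canonical_valuation b = canonical_value b"
proof (induction b)
  case (Var p)
  then show ?case by (simp add: canonical_valuation_def)
next
  case (Neg b)
  then show ?case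
    using mem_or_Neg_mem[of b]
    by (auto simp: canonical_value_def Neg_Neg_mem_iff)
next
  case (Circ b)
  then show ?case
    by (auto simp: canonical_value_def Circ_mem_iff Neg_Circ_mem_iff)
next
  case (Conj b c)
  then show ?case
    by (auto simp: canonical_value_def tmin_def Conj_mem_iff Neg_Conj_mem_iff)
next
  case (Disj b c)
  then show ?case
    using mem_or_Neg_mem[of b] mem_or_Neg_mem[of c]
    by (auto simp: canonical_value_def tmax_def Disj_mem_iff Neg_Disj_mem_iff)
next
  case (Imp b c)
  then show ?case
    by (auto simp: canonical_value_def timp_def Imp_mem_iff Neg_Imp_mem_iff)
qed

end

theorem H_derives_complete:
  assumes "LFI1_entails \<Gamma> a"
  shows "\<Gamma> \<turnstile> a"
proof (rule ccontr)
  assume "\<not> \<Gamma> \<turnstile> a"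
  then obtain M where "\<Gamma> \<subseteq> M" and M: "maximal_nonderiving M a"
    by (rule lindenbaum)
  interpret maximal_nonderiving M a
    by (fact M)
  have "\<forall>g\<in>\<Gamma>. designated (eval canonical_valuation g)"
    using \<open>\<Gamma> \<subseteq> M\<close> by (auto simp: eval_canonical_valuation designated_canonical_value)
  with assms have "designated (eval canonical_valuation a)"
    unfolding LFI1_entails_def by blast
  then have "a \<in> M"
    by (simp add: eval_canonical_valuation designated_canonical_value)
  with a_not_mem show False ..
qed

theorem corollary1:
  fixes \<Gamma> :: "fm set" and \<alpha> :: fm
  shows "H_derives \<Gamma> \<alpha> \<longleftrightarrow> LFI1_entails \<Gamma> \<alpha>"
  using H_derives_sound H_derives_complete by blast

end
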